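(* Let $\mathcal N$ be a network with a binary collision profile and character $D^*$, let $S$ be a schedule, and let $T\ge\max(D^*,1)$ be an integer such that $S[T,k]\in\mathcal M_T$ and $(S[T,k],S[T,k+1])\in\mathcal E_T$ for every $k\in\mathbb Z$. Then $S$ is collision free.
   Context: A network is a triple $\mathcal N=(\mathcal L,\mathcal I,D_{\mathcal L})$ where $\mathcal L$ is a finite nonempty set of links, each $\mathcal I(l)$ is a collection of nonempty subsets of $\mathcal L$, and $D_{\mathcal L}$ assigns an integer $D_{\mathcal L}(l,l')$ to every pair with $l'\in\phi$ for some $\phi\in\mathcal I(l)$. The profile is binary if every $\phi\in\mathcal I(l)$ is a singleton. The character is $D^*=\max_{l}\max_{\phi\in\mathcal I(l)}\max_{l'\in\phi}|D_{\mathcal L}(l,l')|$ (0 if there are no collision sets). A schedule is a map $S:\mathcal L\times\mathbb Z\to\{0,1\}$; $S(l,t)$ has a collision if there is $\phi\in\mathcal I(l)$ with $S(l',t+D_{\mathcal L}(l,l'))=1$ for all $l'\in\phi$; $S$ is collision free if no $(l,t)$ with $S(l,t)=1$ has a collision. $S[T,k]$ is the $|\mathcal L|\times T$ binary matrix with $S[T,k](l,j)=S(l,kT+j)$, $j=0,\dots,T-1$. The scheduling graph $(\mathcal M_T,\mathcal E_T)$ has vertex set $\mathcal M_T$ = all $|\mathcal L|\times T$ binary matrices $A$ with $A=S'[T,0]$ for some collision-free schedule $S'$, and edge set $\mathcal E_T$ = all ordered pairs $(A,B)$ with $A=S'[T,0]$, $B=S'[T,1]$ for some collision-free schedule $S'$.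 *)

theory Defs
  imports Main
begin

text \<open>A network: links L (finite, nonempty), collision profile I, delays D.
  Schedules are maps from links and integer time slots to booleans (True = 1).\<close>

definition network :: "'l set \<Rightarrow> ('l \<Rightarrow> 'l set set) \<Rightarrow> bool" where
  "network L I \<longleftrightarrow> finite L \<and> L \<noteq> {} \<and>
     (\<forall>l\<in>L. \<forall>\<phi>\<in>I l. \<phi> \<noteq> {} \<and> \<phi> \<subseteq> L)"

definition binary_profile :: "'l set \<Rightarrow> ('l \<Rightarrow> 'l set set) \<Rightarrow> bool" where
  "binary_profile L I \<longleftrightarrow> (\<forall>l\<in>L. \<forall>\<phi>\<in>I l. \<exists>l'. \<phi> = {l'})"

definition character :: "'l set \<Rightarrow> ('l \<Rightarrow> 'l set set) \<Rightarrow> ('l \<Rightarrow> 'l \<Rightarrow> int) \<Rightarrow> int" where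
  "character L I D =
     (if {(l, l'). l \<in> L \<and> (\<exists>\<phi>\<in>I l. l' \<in> \<phi>)} = {} then 0
      else Max ((\<lambda>(l, l'). \<bar>D l l'\<bar>) ` {(l, l'). l \<in> L \<and> (\<exists>\<phi>\<in>I l. l' \<in> \<phi>)}))"

definition has_collision ::
  "('l \<Rightarrow> 'l set set) \<Rightarrow> ('l \<Rightarrow> 'l \<Rightarrow> int) \<Rightarrow> ('l \<Rightarrow> int \<Rightarrow> bool) \<Rightarrow> 'l \<Rightarrow> int \<Rightarrow> bool" where
  "has_collision I D S l t \<longleftrightarrow> (\<exists>\<phi>\<in>I l. \<forall>l'\<in>\<phi>. S l' (t + D l l'))"

definition collision_free ::
  "'l set \<Rightarrow> ('l \<Rightarrow> 'l set set) \<Rightarrow> ('l \<Rightarrow> 'l \<Rightarrow> int) \<Rightarrow> ('l \<Rightarrow> int \<Rightarrow> bool) \<Rightarrow> bool" where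
  "collision_free L I D S \<longleftrightarrow> (\<forall>l\<in>L. \<forall>t. S l t \<longrightarrow> \<not> has_collision I D S l t)"

text \<open>The |L| x T binary matrix S[T,k], represented as a function on L x {0..<T}
  (canonically False outside that index range).\<close>

definition block :: "'l set \<Rightarrow> ('l \<Rightarrow> int \<Rightarrow> bool) \<Rightarrow> nat \<Rightarrow> int \<Rightarrow> ('l \<Rightarrow> nat \<Rightarrow> bool)" where
  "block L S T k = (\<lambda>l j. l \<in> L \<and> j < T \<and> S l (k * int T + int j))"

definition sched_vertices ::
  "'l set \<Rightarrow> ('l \<Rightarrow> 'l set set) \<Rightarrow> ('l \<Rightarrow> 'l \<Rightarrow> int) \<Rightarrow> nat \<Rightarrow> ('l \<Rightarrow> nat \<Rightarrow> bool) set" where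
  "sched_vertices L I D T = {A. \<exists>S'. collision_free L I D S' \<and> A = block L S' T 0}"

definition sched_edges ::
  "'l set \<Rightarrow> ('l \<Rightarrow> 'l set set) \<Rightarrow> ('l \<Rightarrow> 'l \<Rightarrow> int) \<Rightarrow> nat \<Rightarrow>
     (('l \<Rightarrow> nat \<Rightarrow> bool) \<times> ('l \<Rightarrow> nat \<Rightarrow> bool)) set" where
  "sched_edges L I D T = {(A, B). \<exists>S'. collision_free L I D S' \<and>
      A = block L S' T 0 \<and> B = block L S' T 1}"

end

theory Submission
  imports Defs
begin

text \<open>With a binary profile, a collision of link l at time t involves just one other slot
  t + d with \<bar>d\<bar> \<le> T. Both slots lie in a window [mT, mT + 2T) for some integer m, and on
  that window S coincides with a collision-free schedule witnessing the edge between
  S[T,m] and S[T,m+1]; so the collision would occur in that schedule too.\<close>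

lemma abs_delay_le_character:
  assumes "network L I" "l \<in> L" "\<phi> \<in> I l" "l' \<in> \<phi>"
  shows "\<bar>D l l'\<bar> \<le> character L I D"
proof -
  let ?P = "{(l, l'). l \<in> L \<and> (\<exists>\<phi>\<in>I l. l' \<in> \<phi>)}"
  have "finite ?P"
    by (rule finite_subset[of _ "L \<times> L"]) (use assms(1) in \<open>auto simp: network_def\<close>)
  moreover have "(l, l') \<in> ?P" using assms by auto
  ultimately have "\<bar>D l l'\<bar> \<le> Max ((\<lambda>(l, l'). \<bar>D l l'\<bar>) ` ?P)" and "?P \<noteq> {}"
    by (force intro: Max_ge)+
  then show ?thesis unfolding character_def by (simp only: if_False)
qed

lemma window_covering_two_slots:
  fixes t d W :: int
  assumes "1 \<le> W" "\<bar>d\<bar> \<le> W"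
  obtains m where "m * W \<le> t" "m * W \<le> t + d" "t < m * W + 2 * W" "t + d < m * W + 2 * W"
proof -
  define k where "k = t div W"
  have "t = k * W + t mod W" unfolding k_def by simp
  moreover have "0 \<le> t mod W" "t mod W < W" using assms(1) by simp_all
  ultimately have k: "k * W \<le> t" "t < k * W + W" by linarith+
  show thesis
  proof (cases "k * W \<le> t + d")
    case True
    then show ?thesis using that[of k] k assms(2) by auto
  next
    case False
    then show ?thesis using that[of "k - 1"] k assms(2) by (auto simp: algebra_simps)
  qed
qed

lemma schedule_eq_of_consecutive_blocks_eq:
  assumes "block L S' T 0 = block L S T k" "block L S' T 1 = block L S T (k + 1)"
    and "l \<in> L" "0 \<le> u" "u < 2 * int T"
  shows "S' l u = S l (k * int T + u)"
proof (cases "u < int T")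
  case True
  then have "block L S' T 0 l (nat u) = block L S T k l (nat u)" "nat u < T"
    using assms(1,4) by simp_all
  then show ?thesis using assms(3,4) by (simp add: block_def)
next
  case False
  then have "block L S' T 1 l (nat (u - int T)) = block L S T (k + 1) l (nat (u - int T))"
      "nat (u - int T) < T"
    using assms(2,5) by simp_all
  then show ?thesis using False assms(3,4) by (simp add: block_def algebra_simps)
qed

lemma collision_free_if_windows_collision_free:
  fixes W :: int
  assumes "network L I" "binary_profile L I" "1 \<le> W"
    and delay_bound: "\<And>l \<phi> l'. l \<in> L \<Longrightarrow> \<phi> \<in> I l \<Longrightarrow> l' \<in> \<phi> \<Longrightarrow> \<bar>D l l'\<bar> \<le> W"
    and windows: "\<And>m. \<exists>S'. collision_free L I D S' \<and>
      (\<forall>l\<in>L. \<forall>u. 0 \<le> u \<and> u < 2 * W \<longrightarrow> S' l u = S l (m * W + u))"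
  shows "collision_free L I D S"
  unfolding collision_free_def
proof (intro ballI allI impI notI)
  fix l t
  assume l: "l \<in> L" and "S l t" and "has_collision I D S l t"
  then obtain \<phi> where \<phi>: "\<phi> \<in> I l" and hit: "\<forall>l'\<in>\<phi>. S l' (t + D l l')"
    unfolding has_collision_def by auto
  obtain l' where l': "\<phi> = {l'}" using assms(2) l \<phi> unfolding binary_profile_def by blast
  have "l' \<in> L" using assms(1) l \<phi> l' unfolding network_def by auto
  obtain m where m: "m * W \<le> t" "m * W \<le> t + D l l'"
    "t < m * W + 2 * W" "t + D l l' < m * W + 2 * W"
    using window_covering_two_slots[OF assms(3) delay_bound[OF l \<phi>, of l']] l' by auto
  obtain S' where cf: "collision_free L I D S'"
    and agree: "\<forall>l\<in>L. \<forall>u. 0 \<le> u \<and> u < 2 * W \<longrightarrow> S' l u = S l (m * W + u)"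
    using windows by blast
  let ?u = "t - m * W"
  have "S' l ?u" using agree l m \<open>S l t\<close> by auto
  moreover have "S' l' (?u + D l l')"
    using agree \<open>l' \<in> L\<close> m hit l' by (auto simp: algebra_simps)
  then have "has_collision I D S' l ?u"
    unfolding has_collision_def using \<phi> l' by auto
  ultimately show False using cf l unfolding collision_free_def by blast
qed

theorem theorem5:
  fixes L :: "'l set" and I :: "'l \<Rightarrow> 'l set set" and D :: "'l \<Rightarrow> 'l \<Rightarrow> int"
    and S :: "'l \<Rightarrow> int \<Rightarrow> bool" and T :: nat
  assumes "network L I"
    and "binary_profile L I"
    and "int T \<ge> max (character L I D) 1"
    and "\<forall>k::int. block L S T k \<in> sched_vertices L I D T"
    and "\<forall>k::int. (block L S T k, block L S T (k + 1)) \<in> sched_edges L I D T"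
  shows "collision_free L I D S"
proof (rule collision_free_if_windows_collision_free[where W = "int T"])
  show "1 \<le> int T" using assms(3) by simp
  show "\<bar>D l l'\<bar> \<le> int T" if "l \<in> L" "\<phi> \<in> I l" "l' \<in> \<phi>" for l \<phi> l'
    using abs_delay_le_character[OF assms(1) that, of D] assms(3) by simp
  show "\<exists>S'. collision_free L I D S' \<and>
      (\<forall>l\<in>L. \<forall>u. 0 \<le> u \<and> u < 2 * int T \<longrightarrow> S' l u = S l (m * int T + u))" for m
  proof -
    obtain S' where "collision_free L I D S'"
      and "block L S T m = block L S' T 0" "block L S T (m + 1) = block L S' T 1"
      using assms(5) unfolding sched_edges_def by blast
    then show ?thesis using schedule_eq_of_consecutive_blocks_eq by metis
  qed
qed (use assms(1,2) in auto)

end
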